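(* Let $q>1$, $p=\frac{q}{q-1}$, and assume Hypothesis (H$_q$). Then for all $x\in[a,b]$ and $\theta>0$, $$\Big|\frac{(x-a)^\theta f(ma)+(b-x)^\theta f(mb)}{b-a}-\frac{\Gamma(\theta+1)}{m^\theta(b-a)}\Big[J^\theta_{(mx)^-}f(ma)+J^\theta_{(mx)^+}f(mb)\Big]\Big|$$ $$\le\frac{m\big(\frac1\theta\beta(p+1,\frac1\theta)\big)^{\frac1p}}{b-a}\Big\{(x-a)^{\theta+1}\Big(\frac{|f'(mx)|^q+\alpha m|f'(a)|^q}{\alpha+1}\Big)^{\frac1q}+(b-x)^{\theta+1}\Big(\frac{|f'(mx)|^q+\alpha m|f'(b)|^q}{\alpha+1}\Big)^{\frac1q}\Big\}.$$
   Context: Let $\Gamma$ denote Euler's Gamma function and $\beta(u,v)=\int_0^1t^{u-1}(1-t)^{v-1}dt$ the Beta function. For $\theta>0$ and $x\in[a,b]$: $J^\theta_{(mx)^-}f(ma)=\frac{1}{\Gamma(\theta)}\int_{ma}^{mx}(s-ma)^{\theta-1}f(s)\,ds$ and $J^\theta_{(mx)^+}f(mb)=\frac{1}{\Gamma(\theta)}\int_{mx}^{mb}(mb-s)^{\theta-1}f(s)\,ds$ (each equal to $0$ if its interval of integration is degenerate). $(\alpha,m)$-convexity: for $(\alpha,m)\in[0,1]\times(0,1]$ and an interval $K\subseteq[0,\infty)$, a function $g:K\to\mathbb{R}$ is $(\alpha,m)$-convex on $K$ if $g(tX+m(1-t)Y)\le t^\alpha g(X)+m(1-t^\alpha)g(Y)$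 for all $X,Y\in K$ and $t\in[0,1]$ with $tX+m(1-t)Y\in K$ (convention $0^0=1$). Hypothesis (H$_q$): $I\subseteq[0,\infty)$ is an interval, $f:I\to\mathbb{R}$ is differentiable on the interior $I^\circ$, $m\in(0,1]$, $\alpha\in[0,1]$, $a<b$ with $ma,b\in I^\circ$, $f'$ is Lebesgue integrable on $[ma,mb]$, and $|f'|^q$ is $(\alpha,m)$-convex on $[ma,b]$. *)

theory Defs
  imports "HOL-Analysis.Analysis"
begin

text \<open>Real power with the convention 0^0 = 1 (Isabelle's powr has 0 powr 0 = 0).\<close>
definition pow00 :: "real \<Rightarrow> real \<Rightarrow> real" where
  "pow00 t s = (if t = 0 \<and> s = 0 then 1 else t powr s)"

definition alpha_m_convex :: "real \<Rightarrow> real \<Rightarrow> real set \<Rightarrow> (real \<Rightarrow> real) \<Rightarrow> bool" where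
  "alpha_m_convex \<alpha> m K g \<longleftrightarrow>
     (\<forall>X\<in>K. \<forall>Y\<in>K. \<forall>t\<in>{0..1}. t * X + m * (1 - t) * Y \<in> K \<longrightarrow>
        g (t * X + m * (1 - t) * Y) \<le> pow00 t \<alpha> * g X + m * (1 - pow00 t \<alpha>) * g Y)"

text \<open>Left Riemann-Liouville type integral J^theta_{(mx)^-} f(ma) and right one J^theta_{(mx)^+} f(mb).\<close>
definition J_left :: "real \<Rightarrow> (real \<Rightarrow> real) \<Rightarrow> real \<Rightarrow> real \<Rightarrow> real" where
  "J_left \<theta> f lo up = (1 / Gamma \<theta>) * (LINT s:{lo..up}|lborel. (s - lo) powr (\<theta> - 1) * f s)"

definition J_right :: "real \<Rightarrow> (real \<Rightarrow> real) \<Rightarrow> real \<Rightarrow> real \<Rightarrow> real" where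
  "J_right \<theta> f lo up = (1 / Gamma \<theta>) * (LINT s:{lo..up}|lborel. (up - s) powr (\<theta> - 1) * f s)"

end

theory Submission
  imports Defs
begin

text \<open>
  Integration by parts turns \<open>(mx - ma)\<^sup>\<theta> f(ma) - \<Gamma>(\<theta> + 1) J\<^sup>\<theta>\<^sub>(\<^sub>m\<^sub>x\<^sub>)\<^sub>- f(ma)\<close>
  into \<open>\<integral> ((s - ma)\<^sup>\<theta> - (mx - ma)\<^sup>\<theta>) f'(s) ds\<close> over \<open>[ma, mx]\<close>, and the reflection
  \<open>s \<mapsto> -s\<close> turns the right-sided fractional integral into a left-sided one.
  Hoelder's inequality bounds such an integral by the \<open>p\<close>-norm of the kernel, a Beta integral after
  the substitution \<open>s = ma + (mx - ma) w\<^sup>1\<^sup>/\<^sup>\<theta>\<close>, times the \<open>q\<close>-norm of \<open>f'\<close>.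
  By \<open>(\<alpha>, m)\<close>-convexity, \<open>|f'|\<^sup>q\<close> lies below the interpolation
  \<open>t\<^sup>\<alpha> |f'(mx)|\<^sup>q + m (1 - t\<^sup>\<alpha>) |f'(a)|\<^sup>q\<close>, whose mean over \<open>t \<in> [0, 1]\<close> is
  \<open>(|f'(mx)|\<^sup>q + \<alpha> m |f'(a)|\<^sup>q) / (\<alpha> + 1)\<close>.
\<close>

lemma has_integral_Beta_kernel:
  fixes \<theta> p :: real
  assumes "\<theta> > 0" "p > 0"
  shows "((\<lambda>t. (1 - t powr \<theta>) powr p) has_integral Beta (p + 1) (1 / \<theta>) / \<theta>) {0..1}"
proof -
  let ?f = "\<lambda>t. (1 - t powr \<theta>) powr p"
  let ?g = "\<lambda>w. w powr (1 / \<theta>)"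
  have fc: "continuous_on {0..1} ?f"
    using assms by (intro continuous_on_powr' continuous_intros) (auto intro!: powr_le1)
  have gc: "continuous_on {0..1} ?g"
    using assms by (intro continuous_on_powr' continuous_intros) auto
  have sub: "?g ` {0..1} \<subseteq> {0..1}"
    using assms by (auto intro!: powr_le1)
  have der: "(?g has_field_derivative (1 / \<theta>) * w powr (1 / \<theta> - 1)) (at w within {0..1})"
    if "w \<in> {0..1} - {0}" for w
  proof -
    have "w > 0" using that by auto
    from has_real_derivative_powr[OF this, of "1 / \<theta>"] show ?thesis
      by (auto intro: has_field_derivative_at_within)
  qed
  have "((\<lambda>w. ((1 / \<theta>) * w powr (1 / \<theta> - 1)) *\<^sub>R ?f (?g w))
           has_integral integral {?g 0..?g 1} ?f) {0..1}"
    by (rule has_integral_substitution_strong[where s="{0}", OF _ _ _ sub fc gc der]) (use assms in auto)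
  then have h1: "((\<lambda>w. ((1 / \<theta>) * w powr (1 / \<theta> - 1)) *\<^sub>R ?f (?g w))
                    has_integral integral {0..1} ?f) {0..1}"
    using assms by simp
  have eq: "((1 / \<theta>) * w powr (1 / \<theta> - 1)) *\<^sub>R ?f (?g w)
              = (1 / \<theta>) * (w powr (1 / \<theta> - 1) * (1 - w) powr (p + 1 - 1))"
    if "w \<in> {0..1}" for w
    using that assms by (simp add: powr_powr)
  have h2: "((\<lambda>w. (1 / \<theta>) * (w powr (1 / \<theta> - 1) * (1 - w) powr (p + 1 - 1)))
              has_integral (1 / \<theta>) * Beta (1 / \<theta>) (p + 1)) {0..1}"
    using assms by (intro has_integral_mult_right has_integral_Beta_real) auto
  have "integral {0..1} ?f = Beta (p + 1) (1 / \<theta>) / \<theta>"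
    using has_integral_unique[OF has_integral_eq[OF eq h1] h2] by (simp add: Beta_commute)
  moreover have "?f integrable_on {0..1}"
    using fc integrable_continuous_real by blast
  ultimately show ?thesis
    by (metis has_integral_integrable_integral)
qed

lemma has_integral_Beta_kernel_interval:
  fixes \<theta> p c d :: real
  assumes "\<theta> > 0" "p > 0" "c < d"
  shows "((\<lambda>s. ((d - c) powr \<theta> - (s - c) powr \<theta>) powr p)
           has_integral (d - c) powr (\<theta> * p + 1) * (Beta (p + 1) (1 / \<theta>) / \<theta>)) {c..d}"
proof -
  let ?k = "\<lambda>s. ((d - c) powr \<theta> - (s - c) powr \<theta>) powr p"
  let ?g = "\<lambda>t. c + (d - c) * t"
  have kc: "continuous_on {c..d} ?k"
    using assms by (intro continuous_on_powr' continuous_intros) (auto intro!: powr_mono2)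
  have "?g ` {0..1} \<subseteq> {c..d}"
  proof
    fix y assume "y \<in> ?g ` {0..1}"
    then obtain t where t: "t \<in> {0..1}" "y = ?g t"
      by blast
    have "0 \<le> (d - c) * t" "(d - c) * t \<le> d - c"
      using t assms by (auto intro: mult_left_le)
    then show "y \<in> {c..d}"
      unfolding t(2) atLeastAtMost_iff by linarith
  qed
  then have h1: "((\<lambda>t. (d - c) *\<^sub>R ?k (?g t)) has_integral integral {?g 0..?g 1} ?k) {0..1}"
    by (intro has_integral_substitution_strong[where s="{}", OF _ _ _ _ kc])
       (use assms in \<open>auto intro!: continuous_intros derivative_eq_intros\<close>)
  have eq: "(d - c) *\<^sub>R ?k (?g t) = (d - c) powr (\<theta> * p + 1) * (1 - t powr \<theta>) powr p"
    if "t \<in> {0..1}" for t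
  proof -
    have "(?g t - c) powr \<theta> = (d - c) powr \<theta> * t powr \<theta>"
      using that assms by (simp add: powr_mult)
    then have "?k (?g t) = ((d - c) powr \<theta> * (1 - t powr \<theta>)) powr p"
      by (simp add: algebra_simps)
    also have "\<dots> = (d - c) powr (\<theta> * p) * (1 - t powr \<theta>) powr p"
      using that assms by (subst powr_mult) (auto intro!: powr_le1 simp: powr_powr)
    finally show ?thesis
      using assms by (simp add: powr_add)
  qed
  have h2: "((\<lambda>t. (d - c) powr (\<theta> * p + 1) * (1 - t powr \<theta>) powr p) has_integral
                   (d - c) powr (\<theta> * p + 1) * (Beta (p + 1) (1 / \<theta>) / \<theta>)) {0..1}"
    using assms by (intro has_integral_mult_right has_integral_Beta_kernel)
  have "integral {c..d} ?k = (d - c) powr (\<theta> * p + 1) * (Beta (p + 1) (1 / \<theta>) / \<theta>)"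
    using has_integral_unique[OF has_integral_eq[OF eq h1] h2] by simp
  moreover have "?k integrable_on {c..d}"
    using kc integrable_continuous_real by blast
  ultimately show ?thesis
    by (metis has_integral_integrable_integral)
qed

lemma has_integral_pow00_rescaled:
  fixes \<alpha> c d :: real
  assumes "\<alpha> \<ge> 0" "c < d"
  shows "((\<lambda>u. pow00 ((u - c) / (d - c)) \<alpha>) has_integral (d - c) / (\<alpha> + 1)) {c..d}"
proof -
  let ?G = "\<lambda>u. (d - c) / (\<alpha> + 1) * ((u - c) / (d - c)) powr (\<alpha> + 1)"
  have "((\<lambda>u. pow00 ((u - c) / (d - c)) \<alpha>) has_integral ?G d - ?G c) {c..d}"
  proof (rule fundamental_theorem_of_calculus_interior)
    show "continuous_on {c..d} ?G"
      using assms by (intro continuous_intros continuous_on_powr') auto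
    fix u assume u: "u \<in> {c<..<d}"
    then have pos: "(u - c) / (d - c) > 0"
      using assms by auto
    have "(?G has_real_derivative
            (d - c) / (\<alpha> + 1) * ((\<alpha> + 1) * ((u - c) / (d - c)) powr (\<alpha> + 1 - 1) * (1 / (d - c)))) (at u)"
      using pos by (intro derivative_eq_intros refl) auto
    moreover have "(d - c) / (\<alpha> + 1) * ((\<alpha> + 1) * ((u - c) / (d - c)) powr (\<alpha> + 1 - 1) * (1 / (d - c)))
                     = pow00 ((u - c) / (d - c)) \<alpha>"
      using pos assms u by (simp add: pow00_def)
    ultimately show "(?G has_vector_derivative pow00 ((u - c) / (d - c)) \<alpha>) (at u)"
      by (simp add: has_real_derivative_iff_has_vector_derivative)
  qed (use assms in auto)
  then show ?thesis
    using assms by simp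
qed

lemma Holder_integral_le:
  fixes g h :: "real \<Rightarrow> real" and p q A B :: real
  assumes pq: "p > 1" "q > 1" "1 / p + 1 / q = 1"
    and nonneg: "\<And>x. x \<in> S \<Longrightarrow> g x \<ge> 0" "\<And>x. x \<in> S \<Longrightarrow> h x \<ge> 0"
    and g: "((\<lambda>x. g x powr p) has_integral A) S" "A > 0"
    and h: "(\<lambda>x. h x powr q) integrable_on S" "integral S (\<lambda>x. h x powr q) \<le> B" "B > 0"
    and gh: "(\<lambda>x. g x * h x) integrable_on S"
  shows "integral S (\<lambda>x. g x * h x) \<le> A powr (1 / p) * B powr (1 / q)"
proof -
  define a where "a = A powr (1 / p)"
  define b where "b = B powr (1 / q)"
  have a: "a > 0" "a powr p = A"
    using g pq by (auto simp: a_def powr_powr)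
  have b: "b > 0" "b powr q = B"
    using h pq by (auto simp: b_def powr_powr)
  have Young: "g x * h x / (a * b) \<le> g x powr p / (p * A) + h x powr q / (q * B)" if "x \<in> S" for x
  proof -
    have "(g x / a) * (h x / b) \<le> (g x / a) powr p / p + (h x / b) powr q / q"
      using Youngs_inequality[OF pq, of "g x / a" "h x / b"] nonneg[OF that] a b by auto
    also have "\<dots> = g x powr p / (p * A) + h x powr q / (q * B)"
      using nonneg[OF that] a b by (simp add: powr_divide mult.commute)
    finally show ?thesis
      by simp
  qed
  have "integral S (\<lambda>x. g x * h x / (a * b))
          \<le> integral S (\<lambda>x. g x powr p / (p * A) + h x powr q / (q * B))"
    using g h gh Young
    by (intro integral_le integrable_add integrable_on_divide) (auto simp: integrable_on_def)
  also have "\<dots> = integral S (\<lambda>x. g x powr p / (p * A)) + integral S (\<lambda>x. h x powr q / (q * B))"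
    using g h by (intro integral_add integrable_on_divide) (auto simp: integrable_on_def)
  also have "\<dots> = A / (p * A) + integral S (\<lambda>x. h x powr q) / (q * B)"
    using g(1) by (simp add: integral_divide integral_unique)
  also have "\<dots> \<le> 1 / p + 1 / q"
    using g h pq divide_right_mono[OF h(2), of "q * B"] by simp
  finally have "integral S (\<lambda>x. g x * h x) / (a * b) \<le> 1"
    using pq by (simp add: integral_divide)
  then show ?thesis
    using a b by (simp add: a_def b_def pos_divide_le_eq)
qed

lemma integral_abs_powr_le_interpolation:
  fixes h :: "real \<Rightarrow> real" and q \<alpha> m A B c d :: real
  assumes "\<alpha> \<ge> 0" "c < d"
    and h: "h absolutely_integrable_on {c..d}"
    and bound: "\<forall>u\<in>{c..d}. \<bar>h u\<bar> powr q
                  \<le> pow00 ((u - c) / (d - c)) \<alpha> * A + m * (1 - pow00 ((u - c) / (d - c)) \<alpha>) * B"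
  shows "(\<lambda>u. \<bar>h u\<bar> powr q) integrable_on {c..d}"
    and "integral {c..d} (\<lambda>u. \<bar>h u\<bar> powr q) \<le> (d - c) * ((A + \<alpha> * m * B) / (\<alpha> + 1))"
proof -
  let ?P = "\<lambda>u. pow00 ((u - c) / (d - c)) \<alpha> * A + m * (1 - pow00 ((u - c) / (d - c)) \<alpha>) * B"
  have "?P = (\<lambda>u. pow00 ((u - c) / (d - c)) \<alpha> * A + (m * B - m * B * pow00 ((u - c) / (d - c)) \<alpha>))"
    by (auto simp: algebra_simps)
  then have "(?P has_integral (d - c) / (\<alpha> + 1) * A + (m * B * (d - c) - m * B * ((d - c) / (\<alpha> + 1)))) {c..d}"
    using assms has_integral_const_real[of "m * B" c d]
    by (simp only:) (intro has_integral_add has_integral_diff has_integral_mult_left has_integral_mult_right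
          has_integral_pow00_rescaled, auto simp: mult.commute)
  moreover have "(d - c) / (\<alpha> + 1) * A + (m * B * (d - c) - m * B * ((d - c) / (\<alpha> + 1)))
                   = (d - c) * ((A + \<alpha> * m * B) / (\<alpha> + 1))"
  proof -
    have "\<alpha> + 1 \<noteq> 0"
      using \<open>\<alpha> \<ge> 0\<close> by simp
    then show ?thesis
      by (simp add: divide_simps) (simp add: algebra_simps)
  qed
  ultimately have P: "(?P has_integral (d - c) * ((A + \<alpha> * m * B) / (\<alpha> + 1))) {c..d}"
    by simp
  have "h \<in> borel_measurable (lebesgue_on {c..d})"
    using h absolutely_integrable_measurable[of "{c..d}" h] by simp
  then have "(\<lambda>u. \<bar>h u\<bar> powr q) \<in> borel_measurable (lebesgue_on {c..d})"
    by measurable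
  then show integrable: "(\<lambda>u. \<bar>h u\<bar> powr q) integrable_on {c..d}"
    by (rule measurable_bounded_by_integrable_imp_integrable)
       (use P bound in \<open>auto simp: integrable_on_def\<close>)
  show "integral {c..d} (\<lambda>u. \<bar>h u\<bar> powr q) \<le> (d - c) * ((A + \<alpha> * m * B) / (\<alpha> + 1))"
    using integral_le[OF integrable, of ?P] P bound by (auto simp: integrable_on_def integral_unique)
qed

lemma absolutely_integrable_powr_kernel_mult:
  fixes h :: "real \<Rightarrow> real" and \<theta> c d :: real
  assumes "\<theta> > 0" "h absolutely_integrable_on {c..d}"
  shows "(\<lambda>u. ((d - c) powr \<theta> - (u - c) powr \<theta>) * h u) absolutely_integrable_on {c..d}"
proof -
  have "continuous_on {c..d} (\<lambda>u. (d - c) powr \<theta> - (u - c) powr \<theta>)"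
    using assms(1) by (intro continuous_intros continuous_on_powr') auto
  then show ?thesis
    using assms(2) by (intro absolutely_integrable_bounded_measurable_product_real
        continuous_imp_measurable_on_sets_lebesgue compact_imp_bounded compact_continuous_image) auto
qed

lemma powr_conjugate_exponents_split:
  fixes L K M \<theta> p q :: real
  assumes "L > 0" "K \<ge> 0" "M \<ge> 0" "p > 0" "1 / p + 1 / q = 1"
  shows "(L powr (\<theta> * p + 1) * K) powr (1 / p) * (L * M) powr (1 / q)
           = L powr (\<theta> + 1) * K powr (1 / p) * M powr (1 / q)"
proof -
  have "(L powr (\<theta> * p + 1) * K) powr (1 / p) = L powr (\<theta> + 1 / p) * K powr (1 / p)"
    using assms(1-4) by (simp add: powr_mult powr_powr field_simps)
  moreover have "(L * M) powr (1 / q) = L powr (1 / q) * M powr (1 / q)"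
    using assms(1,3) by (simp add: powr_mult)
  moreover have "L powr (\<theta> + 1 / p) * L powr (1 / q) = L powr (\<theta> + 1)"
    using assms(5) by (simp add: powr_add[symmetric] add.assoc)
  ultimately show ?thesis
    by (simp add: algebra_simps)
qed

lemma integral_powr_kernel_abs_le:
  fixes h :: "real \<Rightarrow> real" and \<theta> q p \<alpha> m A B c d :: real
  assumes \<theta>: "\<theta> > 0" and q: "q > 1" and p: "p = q / (q - 1)"
    and \<alpha>: "\<alpha> \<ge> 0" and m: "m \<ge> 0" and A: "A \<ge> 0" and B: "B \<ge> 0" and cd: "c < d"
    and h: "h absolutely_integrable_on {c..d}"
    and bound: "\<forall>u\<in>{c..d}. \<bar>h u\<bar> powr q
                  \<le> pow00 ((u - c) / (d - c)) \<alpha> * A + m * (1 - pow00 ((u - c) / (d - c)) \<alpha>) * B"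
  shows "integral {c..d} (\<lambda>u. ((d - c) powr \<theta> - (u - c) powr \<theta>) * \<bar>h u\<bar>)
           \<le> (d - c) powr (\<theta> + 1) * (Beta (p + 1) (1 / \<theta>) / \<theta>) powr (1 / p)
              * ((A + \<alpha> * m * B) / (\<alpha> + 1)) powr (1 / q)"
proof (cases "A + \<alpha> * m * B = 0")
  case True
  then have "A = 0" "\<alpha> * m * B = 0"
    using \<alpha> m A B by (auto simp: add_nonneg_eq_0_iff)
  then have "pow00 t \<alpha> * A + m * (1 - pow00 t \<alpha>) * B = 0" for t
    by (cases "\<alpha> = 0") (auto simp: pow00_def)
  then have "h u = 0" if "u \<in> {c..d}" for u
    using bound that q by auto
  then have "integral {c..d} (\<lambda>u. ((d - c) powr \<theta> - (u - c) powr \<theta>) * \<bar>h u\<bar>) = integral {c..d} (\<lambda>u. 0)"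
    by (intro integral_cong) auto
  then show ?thesis
    using True by simp
next
  case False
  have p1: "p > 1" and pq: "1 / p + 1 / q = 1"
    using q by (auto simp: p field_simps)
  define K where "K = Beta (p + 1) (1 / \<theta>) / \<theta>"
  define M where "M = (A + \<alpha> * m * B) / (\<alpha> + 1)"
  have K: "K > 0"
    unfolding K_def Beta_def using \<theta> p1
    by (intro divide_pos_pos mult_pos_pos Gamma_real_pos) (auto intro: add_pos_pos)
  have "M \<ge> 0"
    unfolding M_def using \<alpha> m A B by (intro divide_nonneg_pos add_nonneg_nonneg mult_nonneg_nonneg) auto
  moreover have "M \<noteq> 0"
    using False \<alpha> by (simp add: M_def)
  ultimately have M: "M > 0"
    by simp
  have "integral {c..d} (\<lambda>u. ((d - c) powr \<theta> - (u - c) powr \<theta>) * \<bar>h u\<bar>)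
          \<le> ((d - c) powr (\<theta> * p + 1) * K) powr (1 / p) * ((d - c) * M) powr (1 / q)"
  proof (rule Holder_integral_le[OF p1 q pq])
    show "((\<lambda>u. ((d - c) powr \<theta> - (u - c) powr \<theta>) powr p) has_integral (d - c) powr (\<theta> * p + 1) * K) {c..d}"
      unfolding K_def using has_integral_Beta_kernel_interval[OF \<theta> _ cd, of p] p1 by simp
    show "(\<lambda>u. ((d - c) powr \<theta> - (u - c) powr \<theta>) * \<bar>h u\<bar>) integrable_on {c..d}"
      using h \<theta> by (intro set_lebesgue_integral_eq_integral(1) absolutely_integrable_powr_kernel_mult)
        (auto simp: set_integrable_abs)
  qed (use \<theta> cd K M integral_abs_powr_le_interpolation[OF \<alpha> cd h bound, folded M_def]
       in \<open>auto intro!: powr_mono2\<close>)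
  also have "\<dots> = (d - c) powr (\<theta> + 1) * K powr (1 / p) * M powr (1 / q)"
    using cd K M p1 pq by (intro powr_conjugate_exponents_split) auto
  finally show ?thesis
    by (simp add: K_def M_def)
qed

lemma integral_powr_kernel_bound:
  fixes h :: "real \<Rightarrow> real" and \<theta> q p \<alpha> m A B c d :: real
  assumes "\<theta> > 0" "q > 1" "p = q / (q - 1)" "\<alpha> \<ge> 0" "m \<ge> 0" "A \<ge> 0" "B \<ge> 0" "c \<le> d"
    and h: "h absolutely_integrable_on {c..d}"
    and "\<forall>u\<in>{c..d}. \<bar>h u\<bar> powr q
           \<le> pow00 ((u - c) / (d - c)) \<alpha> * A + m * (1 - pow00 ((u - c) / (d - c)) \<alpha>) * B"
  shows "\<bar>integral {c..d} (\<lambda>u. ((u - c) powr \<theta> - (d - c) powr \<theta>) * h u)\<bar>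
           \<le> (d - c) powr (\<theta> + 1) * (Beta (p + 1) (1 / \<theta>) / \<theta>) powr (1 / p)
              * ((A + \<alpha> * m * B) / (\<alpha> + 1)) powr (1 / q)"
proof (cases "c = d")
  case False
  let ?k = "\<lambda>u. (d - c) powr \<theta> - (u - c) powr \<theta>"
  have k_nonneg: "?k u \<ge> 0" if "u \<in> {c..d}" for u
    using that assms(1) by (auto intro!: powr_mono2)
  have kh: "(\<lambda>u. ?k u * h u) absolutely_integrable_on {c..d}"
    and k_abs_h: "(\<lambda>u. ?k u * \<bar>h u\<bar>) absolutely_integrable_on {c..d}"
    using assms(1) h by (auto intro!: absolutely_integrable_powr_kernel_mult simp: set_integrable_abs)
  have "integral {c..d} (\<lambda>u. ((u - c) powr \<theta> - (d - c) powr \<theta>) * h u) = - integral {c..d} (\<lambda>u. ?k u * h u)"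
    by (simp add: algebra_simps flip: integral_neg)
  then have "\<bar>integral {c..d} (\<lambda>u. ((u - c) powr \<theta> - (d - c) powr \<theta>) * h u)\<bar>
               = \<bar>integral {c..d} (\<lambda>u. ?k u * h u)\<bar>"
    by simp
  also have "\<dots> \<le> integral {c..d} (\<lambda>u. ?k u * \<bar>h u\<bar>)"
    using integral_norm_bound_integral[of "\<lambda>u. ?k u * h u" "{c..d}" "\<lambda>u. ?k u * \<bar>h u\<bar>"]
      kh k_abs_h k_nonneg by (auto simp: set_lebesgue_integral_eq_integral abs_mult)
  also have "\<dots> \<le> (d - c) powr (\<theta> + 1) * (Beta (p + 1) (1 / \<theta>) / \<theta>) powr (1 / p)
                   * ((A + \<alpha> * m * B) / (\<alpha> + 1)) powr (1 / q)"
    using False assms by (intro integral_powr_kernel_abs_le) auto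
  finally show ?thesis .
qed simp

lemma has_integral_powr_shifted:
  fixes \<theta> c d :: real
  assumes "\<theta> > 0" "c \<le> d"
  shows "((\<lambda>s. (s - c) powr (\<theta> - 1)) has_integral (d - c) powr \<theta> / \<theta>) {c..d}"
proof -
  have "((\<lambda>s. (s - c) powr (\<theta> - 1)) has_integral (d - c) powr \<theta> / \<theta> - (c - c) powr \<theta> / \<theta>) {c..d}"
  proof (rule fundamental_theorem_of_calculus_interior[OF assms(2)])
    show "continuous_on {c..d} (\<lambda>s. (s - c) powr \<theta> / \<theta>)"
      using assms(1) by (intro continuous_intros continuous_on_powr') auto
    fix s assume "s \<in> {c<..<d}"
    then have "((\<lambda>s. (s - c) powr \<theta> / \<theta>) has_real_derivative \<theta> * (s - c) powr (\<theta> - 1) * 1 / \<theta>) (at s)"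
      using assms(1) by (intro derivative_eq_intros refl) auto
    then show "((\<lambda>s. (s - c) powr \<theta> / \<theta>) has_vector_derivative (s - c) powr (\<theta> - 1)) (at s)"
      using assms(1) by (simp add: has_real_derivative_iff_has_vector_derivative)
  qed
  then show ?thesis
    using assms(1) by simp
qed

lemma Gamma_mult_J_left_eq_integral:
  fixes F :: "real \<Rightarrow> real" and \<theta> c d :: real
  assumes \<theta>: "\<theta> > 0" and "c \<le> d" and F: "continuous_on {c..d} F"
  shows "Gamma (\<theta> + 1) * J_left \<theta> F c d = \<theta> * integral {c..d} (\<lambda>s. (s - c) powr (\<theta> - 1) * F s)"
proof -
  have "(\<lambda>s. (s - c) powr (\<theta> - 1)) absolutely_integrable_on {c..d}"
    using has_integral_powr_shifted[OF assms(1,2)]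
    by (intro nonnegative_absolutely_integrable_1) (auto simp: integrable_on_def)
  then have "(\<lambda>s. F s * (s - c) powr (\<theta> - 1)) absolutely_integrable_on {c..d}"
    using F by (intro absolutely_integrable_bounded_measurable_product_real
        continuous_imp_measurable_on_sets_lebesgue compact_imp_bounded compact_continuous_image) auto
  moreover have "(\<lambda>s. indicator {c..d} s *\<^sub>R F s) \<in> borel_measurable borel"
    using F by (intro borel_measurable_continuous_on_indicator) auto
  then have "(\<lambda>s. (s - c) powr (\<theta> - 1) * (indicator {c..d} s *\<^sub>R F s)) \<in> borel_measurable borel"
    by measurable
  ultimately have "set_integrable lborel {c..d} (\<lambda>s. (s - c) powr (\<theta> - 1) * F s)"
    using integrable_completion[of "\<lambda>s. indicator {c..d} s *\<^sub>R ((s - c) powr (\<theta> - 1) * F s)" lborel]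
    unfolding set_integrable_def by (simp add: ac_simps)
  then have "J_left \<theta> F c d = integral {c..d} (\<lambda>s. (s - c) powr (\<theta> - 1) * F s) / Gamma \<theta>"
    unfolding J_left_def by (simp add: set_borel_integral_eq_integral(2))
  moreover have "Gamma (\<theta> + 1) = \<theta> * Gamma \<theta>" "Gamma \<theta> > 0"
    using \<theta> by (auto intro!: Gamma_plus1 dest: nonpos_Ints_nonpos)
  ultimately show ?thesis
    by simp
qed

lemma J_right_eq_J_left_reflect:
  "J_right \<theta> f lo up = J_left \<theta> (\<lambda>u. f (- u)) (- up) (- lo)"
proof -
  have "(LINT s:{lo..up}|lborel. (up - s) powr (\<theta> - 1) * f s)
          = (LINT u:{- up..- lo}|lborel. (u - - up) powr (\<theta> - 1) * f (- u))"
    unfolding set_lebesgue_integral_def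
    by (subst lborel_integral_real_affine[where c = "-1" and t = 0])
       (auto simp: indicator_def intro!: Bochner_Integration.integral_cong)
  then show ?thesis
    unfolding J_left_def J_right_def by simp
qed

lemma fractional_integral_by_parts:
  fixes F F' :: "real \<Rightarrow> real" and \<theta> c d :: real
  assumes \<theta>: "\<theta> > 0" and cd: "c \<le> d"
    and der: "\<And>s. s \<in> {c..d} \<Longrightarrow> (F has_real_derivative F' s) (at s)"
    and F': "F' absolutely_integrable_on {c..d}"
  shows "(d - c) powr \<theta> * F c - Gamma (\<theta> + 1) * J_left \<theta> F c d
           = integral {c..d} (\<lambda>s. ((s - c) powr \<theta> - (d - c) powr \<theta>) * F' s)"
proof -
  let ?u = "\<lambda>s. (s - c) powr \<theta> - (d - c) powr \<theta>"
  have Fc: "continuous_on {c..d} F"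
    using der by (meson DERIV_isCont continuous_at_imp_continuous_on)
  have uc: "continuous_on {c..d} ?u"
    using \<theta> by (intro continuous_intros continuous_on_powr') auto
  then have "?u \<in> borel_measurable (lebesgue_on {c..d})" "bounded (?u ` {c..d})"
    by (auto intro: continuous_imp_measurable_on_sets_lebesgue compact_imp_bounded
          compact_continuous_image)
  then have "((\<lambda>s. ?u s * F' s) has_integral integral {c..d} (\<lambda>s. ?u s * F' s)) {c..d}"
    using F' by (intro integrable_integral set_lebesgue_integral_eq_integral(1)
        absolutely_integrable_bounded_measurable_product_real) auto
  then have "((\<lambda>s. (\<theta> * (s - c) powr (\<theta> - 1)) * F s)
               has_integral (d - c) powr \<theta> * F c - integral {c..d} (\<lambda>s. ?u s * F' s)) {c..d}"
  proof (intro integration_by_parts_interior_strong[where s = "{}", OF bounded_bilinear_mult _ cd uc Fc])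
    fix s assume s: "s \<in> {c<..<d} - {}"
    have "(?u has_real_derivative \<theta> * (s - c) powr (\<theta> - 1) * 1) (at s)"
      using s by (intro derivative_eq_intros refl) auto
    then show "(?u has_vector_derivative \<theta> * (s - c) powr (\<theta> - 1)) (at s)"
      by (simp add: has_real_derivative_iff_has_vector_derivative)
    show "(F has_vector_derivative F' s) (at s)"
      using der[of s] s by (simp add: has_real_derivative_iff_has_vector_derivative)
  qed (use \<theta> in simp_all)
  then have "\<theta> * integral {c..d} (\<lambda>s. (s - c) powr (\<theta> - 1) * F s)
               = (d - c) powr \<theta> * F c - integral {c..d} (\<lambda>s. ?u s * F' s)"
    by (simp add: mult.assoc integral_unique flip: integral_mult_right)
  then show ?thesis
    using Gamma_mult_J_left_eq_integral[OF \<theta> cd Fc] by simp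
qed

lemma J_left_error_bound:
  fixes F F' :: "real \<Rightarrow> real" and \<theta> q p \<alpha> m A B c d :: real
  assumes "\<theta> > 0" "q > 1" "p = q / (q - 1)" "\<alpha> \<ge> 0" "m \<ge> 0" "A \<ge> 0" "B \<ge> 0" "c \<le> d"
    and "\<And>s. s \<in> {c..d} \<Longrightarrow> (F has_real_derivative F' s) (at s)"
    and "F' absolutely_integrable_on {c..d}"
    and "\<forall>u\<in>{c..d}. \<bar>F' u\<bar> powr q
           \<le> pow00 ((u - c) / (d - c)) \<alpha> * A + m * (1 - pow00 ((u - c) / (d - c)) \<alpha>) * B"
  shows "\<bar>(d - c) powr \<theta> * F c - Gamma (\<theta> + 1) * J_left \<theta> F c d\<bar>
           \<le> (d - c) powr (\<theta> + 1) * (Beta (p + 1) (1 / \<theta>) / \<theta>) powr (1 / p)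
              * ((A + \<alpha> * m * B) / (\<alpha> + 1)) powr (1 / q)"
  using fractional_integral_by_parts[of \<theta> c d F F'] integral_powr_kernel_bound[of \<theta> q p \<alpha> m A B c d F'] assms
  by simp

lemma alpha_m_convex_le_interpolation:
  fixes g :: "real \<Rightarrow> real" and \<alpha> m X Y u :: real
  assumes "alpha_m_convex \<alpha> m K g" "X \<in> K" "Y \<in> K" "u \<in> K" "u \<in> closed_segment X (m * Y)"
  shows "g u \<le> pow00 ((u - m * Y) / (X - m * Y)) \<alpha> * g X
                + m * (1 - pow00 ((u - m * Y) / (X - m * Y)) \<alpha>) * g Y"
proof -
  \<comment> \<open>if \<open>X = m * Y\<close> then \<open>t = 0\<close> by division by zero, which is harmless since then \<open>u = m * Y\<close>\<close>
  define t where "t = (u - m * Y) / (X - m * Y)"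
  have t: "t \<in> {0..1}"
    using assms(5) by (auto simp: t_def closed_segment_eq_real_ivl divide_simps split: if_splits)
  have "t * X + m * (1 - t) * Y = m * Y + t * (X - m * Y)"
    by (simp add: algebra_simps)
  also have "\<dots> = u"
    using assms(5) by (cases "X = m * Y") (auto simp: t_def)
  finally have "g u \<le> pow00 t \<alpha> * g X + m * (1 - pow00 t \<alpha>) * g Y"
    using assms(1-4) t unfolding alpha_m_convex_def by metis
  then show ?thesis
    by (simp only: t_def)
qed

lemma error_bound_rescale:
  fixes m L \<theta> v G J C :: real
  assumes "m > 0" "L \<ge> 0"
    and "\<bar>(m * L) powr \<theta> * v - G * J\<bar> \<le> (m * L) powr (\<theta> + 1) * C"
  shows "\<bar>L powr \<theta> * v - G / m powr \<theta> * J\<bar> \<le> m * L powr (\<theta> + 1) * C"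
proof -
  have "\<bar>L powr \<theta> * v - G / m powr \<theta> * J\<bar> = \<bar>(m * L) powr \<theta> * v - G * J\<bar> / m powr \<theta>"
    using assms(1,2) by (simp add: powr_mult field_simps)
  also have "\<dots> \<le> (m * L) powr (\<theta> + 1) * C / m powr \<theta>"
    using assms(1,3) by (simp add: divide_right_mono)
  also have "\<dots> = m * L powr (\<theta> + 1) * C"
    using assms(1,2) by (simp add: powr_mult powr_add)
  finally show ?thesis .
qed

lemma J_left_alpha_m_convex_bound:
  fixes f f' :: "real \<Rightarrow> real" and \<theta> q p \<alpha> m a x :: real
  assumes \<theta>: "\<theta> > 0" and q: "q > 1" and p: "p = q / (q - 1)"
    and \<alpha>: "\<alpha> \<ge> 0" and m: "m > 0" and "a \<le> x"
    and der: "\<And>s. s \<in> {m * a..m * x} \<Longrightarrow> (f has_real_derivative f' s) (at s)"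
    and f': "f' absolutely_integrable_on {m * a..m * x}"
    and conv: "alpha_m_convex \<alpha> m K (\<lambda>y. \<bar>f' y\<bar> powr q)"
    and K: "m * x \<in> K" "a \<in> K" "{m * a..m * x} \<subseteq> K"
  shows "\<bar>(x - a) powr \<theta> * f (m * a) - Gamma (\<theta> + 1) / m powr \<theta> * J_left \<theta> f (m * a) (m * x)\<bar>
           \<le> m * (x - a) powr (\<theta> + 1) * (((1 / \<theta>) * Beta (p + 1) (1 / \<theta>)) powr (1 / p)
              * ((\<bar>f' (m * x)\<bar> powr q + \<alpha> * m * \<bar>f' a\<bar> powr q) / (\<alpha> + 1)) powr (1 / q))"
proof (rule error_bound_rescale)
  have "\<forall>u\<in>{m * a..m * x}. \<bar>f' u\<bar> powr q
          \<le> pow00 ((u - m * a) / (m * x - m * a)) \<alpha> * \<bar>f' (m * x)\<bar> powr q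
             + m * (1 - pow00 ((u - m * a) / (m * x - m * a)) \<alpha>) * \<bar>f' a\<bar> powr q"
    using alpha_m_convex_le_interpolation[OF conv K(1,2)] K(3) by (auto simp: closed_segment_eq_real_ivl)
  then show "\<bar>(m * (x - a)) powr \<theta> * f (m * a) - Gamma (\<theta> + 1) * J_left \<theta> f (m * a) (m * x)\<bar>
               \<le> (m * (x - a)) powr (\<theta> + 1) * (((1 / \<theta>) * Beta (p + 1) (1 / \<theta>)) powr (1 / p)
                  * ((\<bar>f' (m * x)\<bar> powr q + \<alpha> * m * \<bar>f' a\<bar> powr q) / (\<alpha> + 1)) powr (1 / q))"
    using J_left_error_bound[OF \<theta> q p \<alpha> _ _ _ _ der f'] m \<open>a \<le> x\<close>
    by (simp add: right_diff_distrib mult.assoc)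
qed (use m \<open>a \<le> x\<close> in auto)

lemma J_right_alpha_m_convex_bound:
  fixes f f' :: "real \<Rightarrow> real" and \<theta> q p \<alpha> m b x :: real
  assumes \<theta>: "\<theta> > 0" and q: "q > 1" and p: "p = q / (q - 1)"
    and \<alpha>: "\<alpha> \<ge> 0" and m: "m > 0" and "x \<le> b"
    and der: "\<And>s. s \<in> {m * x..m * b} \<Longrightarrow> (f has_real_derivative f' s) (at s)"
    and f': "f' absolutely_integrable_on {m * x..m * b}"
    and conv: "alpha_m_convex \<alpha> m K (\<lambda>y. \<bar>f' y\<bar> powr q)"
    and K: "m * x \<in> K" "b \<in> K" "{m * x..m * b} \<subseteq> K"
  shows "\<bar>(b - x) powr \<theta> * f (m * b) - Gamma (\<theta> + 1) / m powr \<theta> * J_right \<theta> f (m * x) (m * b)\<bar>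
           \<le> m * (b - x) powr (\<theta> + 1) * (((1 / \<theta>) * Beta (p + 1) (1 / \<theta>)) powr (1 / p)
              * ((\<bar>f' (m * x)\<bar> powr q + \<alpha> * m * \<bar>f' b\<bar> powr q) / (\<alpha> + 1)) powr (1 / q))"
proof (rule error_bound_rescale)
  have der': "((\<lambda>u. f (- u)) has_real_derivative - f' (- u)) (at u)" if "u \<in> {- (m * b)..- (m * x)}" for u
    using DERIV_chain2[OF der[of "- u"] DERIV_minus[OF DERIV_ident]] that by simp
  have "(\<lambda>u. (- 1) * f' (- u)) absolutely_integrable_on {- (m * b)..- (m * x)}"
    using f' by (intro set_integrable_mult_right) simp
  then have f'': "(\<lambda>u. - f' (- u)) absolutely_integrable_on {- (m * b)..- (m * x)}"
    by simp
  have "\<forall>u\<in>{- (m * b)..- (m * x)}. \<bar>- f' (- u)\<bar> powr q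
          \<le> pow00 ((u - - (m * b)) / (- (m * x) - - (m * b))) \<alpha> * \<bar>f' (m * x)\<bar> powr q
             + m * (1 - pow00 ((u - - (m * b)) / (- (m * x) - - (m * b))) \<alpha>) * \<bar>f' b\<bar> powr q"
  proof
    fix u assume "u \<in> {- (m * b)..- (m * x)}"
    then have "- u \<in> K" "- u \<in> closed_segment (m * x) (m * b)"
      using K(3) closed_segment_eq_real_ivl1[of "m * x" "m * b"] m \<open>x \<le> b\<close> by auto
    moreover have "(u - - (m * b)) / (- (m * x) - - (m * b)) = (- u - m * b) / (m * x - m * b)"
      using minus_divide_divide[of "- u - m * b" "m * x - m * b"] by (simp add: add.commute)
    ultimately show "\<bar>- f' (- u)\<bar> powr q
          \<le> pow00 ((u - - (m * b)) / (- (m * x) - - (m * b))) \<alpha> * \<bar>f' (m * x)\<bar> powr q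
             + m * (1 - pow00 ((u - - (m * b)) / (- (m * x) - - (m * b))) \<alpha>) * \<bar>f' b\<bar> powr q"
      using alpha_m_convex_le_interpolation[OF conv K(1,2), of "- u"] by simp
  qed
  then show "\<bar>(m * (b - x)) powr \<theta> * f (m * b) - Gamma (\<theta> + 1) * J_right \<theta> f (m * x) (m * b)\<bar>
               \<le> (m * (b - x)) powr (\<theta> + 1) * (((1 / \<theta>) * Beta (p + 1) (1 / \<theta>)) powr (1 / p)
                  * ((\<bar>f' (m * x)\<bar> powr q + \<alpha> * m * \<bar>f' b\<bar> powr q) / (\<alpha> + 1)) powr (1 / q))"
    using J_left_error_bound[OF \<theta> q p \<alpha> _ _ _ _ der' f''] m \<open>x \<le> b\<close>
    by (simp add: J_right_eq_J_left_reflect right_diff_distrib mult.assoc)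
qed (use m \<open>x \<le> b\<close> in auto)

lemma fractional_trapezoid_error_bound:
  fixes f f' :: "real \<Rightarrow> real" and \<theta> q p \<alpha> m a b x :: real
  assumes \<theta>: "\<theta> > 0" and q: "q > 1" and p: "p = q / (q - 1)"
    and \<alpha>: "\<alpha> \<ge> 0" and m: "m > 0" and x: "x \<in> {a..b}"
    and der: "\<And>s. s \<in> {m * a..m * b} \<Longrightarrow> (f has_real_derivative f' s) (at s)"
    and f': "f' absolutely_integrable_on {m * a..m * b}"
    and conv: "alpha_m_convex \<alpha> m K (\<lambda>y. \<bar>f' y\<bar> powr q)"
    and K: "m * x \<in> K" "a \<in> K" "b \<in> K" "{m * a..m * b} \<subseteq> K"
  shows "\<bar>((x - a) powr \<theta> * f (m * a) + (b - x) powr \<theta> * f (m * b)) / (b - a)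
          - Gamma (\<theta> + 1) / (m powr \<theta> * (b - a))
            * (J_left \<theta> f (m * a) (m * x) + J_right \<theta> f (m * x) (m * b))\<bar>
         \<le> m * ((1 / \<theta>) * Beta (p + 1) (1 / \<theta>)) powr (1 / p) / (b - a)
            * ((x - a) powr (\<theta> + 1)
                 * ((\<bar>f' (m * x)\<bar> powr q + \<alpha> * m * \<bar>f' a\<bar> powr q) / (\<alpha> + 1)) powr (1 / q)
             + (b - x) powr (\<theta> + 1)
                 * ((\<bar>f' (m * x)\<bar> powr q + \<alpha> * m * \<bar>f' b\<bar> powr q) / (\<alpha> + 1)) powr (1 / q))"
proof (cases "a = b")
  case False
  with x have ab: "b - a > 0"
    by simp
  have mx: "m * a \<le> m * x" "m * x \<le> m * b"
    using x m by auto
  then have f'L: "f' absolutely_integrable_on {m * a..m * x}"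
    and f'R: "f' absolutely_integrable_on {m * x..m * b}"
    using absolutely_integrable_on_subcbox[OF f'] by fastforce+
  let ?C = "((1 / \<theta>) * Beta (p + 1) (1 / \<theta>)) powr (1 / p)"
  let ?BL = "((\<bar>f' (m * x)\<bar> powr q + \<alpha> * m * \<bar>f' a\<bar> powr q) / (\<alpha> + 1)) powr (1 / q)"
  let ?BR = "((\<bar>f' (m * x)\<bar> powr q + \<alpha> * m * \<bar>f' b\<bar> powr q) / (\<alpha> + 1)) powr (1 / q)"
  let ?EL = "(x - a) powr \<theta> * f (m * a) - Gamma (\<theta> + 1) / m powr \<theta> * J_left \<theta> f (m * a) (m * x)"
  let ?ER = "(b - x) powr \<theta> * f (m * b) - Gamma (\<theta> + 1) / m powr \<theta> * J_right \<theta> f (m * x) (m * b)"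
  have left: "\<bar>?EL\<bar> \<le> m * (x - a) powr (\<theta> + 1) * (?C * ?BL)"
    using x mx K by (intro J_left_alpha_m_convex_bound[OF \<theta> q p \<alpha> m _ der f'L conv]) auto
  have right: "\<bar>?ER\<bar> \<le> m * (b - x) powr (\<theta> + 1) * (?C * ?BR)"
    using x mx K by (intro J_right_alpha_m_convex_bound[OF \<theta> q p \<alpha> m _ der f'R conv]) auto
  have "(A\<^sub>1 + A\<^sub>2) / D - G / (M * D) * (J\<^sub>1 + J\<^sub>2) = (A\<^sub>1 - G / M * J\<^sub>1 + (A\<^sub>2 - G / M * J\<^sub>2)) / D"
    if "D \<noteq> 0" "M \<noteq> 0" for A\<^sub>1 A\<^sub>2 D G M J\<^sub>1 J\<^sub>2 :: real
    using that by (simp add: field_simps)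
  then have "\<bar>((x - a) powr \<theta> * f (m * a) + (b - x) powr \<theta> * f (m * b)) / (b - a)
               - Gamma (\<theta> + 1) / (m powr \<theta> * (b - a))
                 * (J_left \<theta> f (m * a) (m * x) + J_right \<theta> f (m * x) (m * b))\<bar>
             = \<bar>?EL + ?ER\<bar> / (b - a)"
    using ab m by simp
  also have "\<dots> \<le> (m * (x - a) powr (\<theta> + 1) * (?C * ?BL) + m * (b - x) powr (\<theta> + 1) * (?C * ?BR)) / (b - a)"
    using ab left right by (intro divide_right_mono abs_triangle_ineq[THEN order_trans]) auto
  also have "\<dots> = m * ?C / (b - a) * ((x - a) powr (\<theta> + 1) * ?BL + (b - x) powr (\<theta> + 1) * ?BR)"
    using ab by (simp add: field_simps)
  finally show ?thesis .
qed simp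

lemma atLeastAtMost_subset_interior:
  fixes I :: "real set"
  assumes "is_interval I" "u \<in> interior I" "v \<in> interior I"
  shows "{u..v} \<subseteq> interior I"
proof -
  have "is_interval (interior I)"
    using assms(1) by (simp add: is_interval_convex_1 convex_interior is_interval_convex)
  with assms(2,3) show ?thesis
    unfolding is_interval_1 by (meson atLeastAtMost_iff subsetI)
qed

theorem mainTheorem13:
  fixes I :: "real set" and f f' :: "real \<Rightarrow> real"
    and m \<alpha> a b q p x \<theta> :: real
  assumes q: "q > 1" and p: "p = q / (q - 1)"
    and I: "is_interval I" "I \<subseteq> {0..}"
    and deriv: "\<forall>y\<in>interior I. (f has_real_derivative f' y) (at y)"
    and m: "0 < m" "m \<le> 1"
    and \<alpha>: "0 \<le> \<alpha>" "\<alpha> \<le> 1"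
    and ab: "a < b" "m * a \<in> interior I" "b \<in> interior I"
    and integ: "set_integrable lborel {m * a..m * b} f'"
    and conv: "alpha_m_convex \<alpha> m {m * a..b} (\<lambda>y. \<bar>f' y\<bar> powr q)"
    and x: "x \<in> {a..b}"
    and \<theta>: "\<theta> > 0"
  shows "\<bar>((x - a) powr \<theta> * f (m * a) + (b - x) powr \<theta> * f (m * b)) / (b - a)
          - Gamma (\<theta> + 1) / (m powr \<theta> * (b - a))
            * (J_left \<theta> f (m * a) (m * x) + J_right \<theta> f (m * x) (m * b))\<bar>
         \<le> m * ((1 / \<theta>) * Beta (p + 1) (1 / \<theta>)) powr (1 / p) / (b - a)
            * ((x - a) powr (\<theta> + 1)
                 * ((\<bar>f' (m * x)\<bar> powr q + \<alpha> * m * \<bar>f' a\<bar> powr q) / (\<alpha> + 1)) powr (1 / q)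
             + (b - x) powr (\<theta> + 1)
                 * ((\<bar>f' (m * x)\<bar> powr q + \<alpha> * m * \<bar>f' b\<bar> powr q) / (\<alpha> + 1)) powr (1 / q))"
proof -
  have "m * a \<ge> 0"
    using ab(2) I(2) interior_subset by blast
  with m ab(1) have mb: "m * b \<le> b" and ma: "m * a \<le> a"
    by (auto simp: zero_le_mult_iff intro!: mult_left_le_one_le)
  have mx: "m * a \<le> m * x" "m * x \<le> m * b"
    using x m(1) by auto
  have K: "{m * a..b} \<subseteq> interior I"
    using atLeastAtMost_subset_interior[OF I(1) ab(2,3)] .
  show ?thesis
  proof (rule fractional_trapezoid_error_bound[OF \<theta> q p \<alpha>(1) m(1) x _ _ conv])
    show "(f has_real_derivative f' s) (at s)" if "s \<in> {m * a..m * b}" for s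
      using deriv K that mb by (auto simp: subset_iff)
    show "f' absolutely_integrable_on {m * a..m * b}"
      using integ integrable_completion[OF borel_measurable_integrable] unfolding set_integrable_def by blast
  qed (use mx ma mb ab(1) in auto)
qed

end
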